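(* Let $(V,\varrho,K)$ be a representation of a difference Lie algebra $(\mathfrak g,D)$. Set $\mathfrak C^1=\mathrm{Hom}(\mathfrak g,V)$ and $\mathfrak C^n=\mathrm{Hom}(\wedge^n\mathfrak g,V)\oplus\mathrm{Hom}(\wedge^{n-1}\mathfrak g,V)$ for $n\ge2$, and define $\delta_\varrho:\mathfrak C^n\to\mathfrak C^{n+1}$ by $\delta_\varrho(f,\theta)=(d^{CE}_\varrho f,\ \partial\theta+T(f))$ (for $n=1$, $\delta_\varrho f=(d^{CE}_\varrho f,T(f))$). Then $\delta_\varrho\circ\delta_\varrho=0$.
   Context: A difference Lie algebra $(\mathfrak g,D)$: a Lie algebra with linear $D$ such that $D[x,y]=[x,D(y)]-[y,D(x)]+[D(x),D(y)]$. A representation $(V,\varrho,K)$: a Lie algebra representation $\varrho:\mathfrak g\to\mathfrak{gl}(V)$ and linear $K:V\to V$ with $K(\varrho(x)u)=\varrho(D(x))u+\varrho(x)K(u)+\varrho(D(x))K(u)$. $d^{CE}_\varrho$ is the Chevalley–Eilenberg differential of $\mathfrak g$ with coefficients in $(V,\varrho)$. For $\theta\in\mathrm{Hom}(\wedge^{n-1}\mathfrak g,V)$: $\partial\theta(x_1,\dots,x_n)=\sum_{i=1}^n(-1)^{i+1}\varrho(x_i)\theta(x_1,\dots,\hat x_i,\dots,x_n)+\sum_{i=1}^n(-1)^{i+1}\varrho(D(x_i))\theta(x_1,\dots,\hat x_i,\dots,x_n)+\sum_{i<j}(-1)^{i+j}\theta([x_i,x_j],x_1,\dots,\hat x_i,\dots,\hat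 x_j,\dots,x_n)$. For $f\in\mathrm{Hom}(\wedge^n\mathfrak g,V)$: $T(f)(x_1,\dots,x_n)=(-1)^n\big(\sum_{k=1}^n\sum_{1\le i_1<\cdots<i_k\le n}f(y_1,\dots,y_n)-K(f(x_1,\dots,x_n))\big)$, where $y_j=D(x_j)$ if $j\in\{i_1,\dots,i_k\}$ and $y_j=x_j$ otherwise. *)

theory Defs
  imports Main "HOL.Vector_Spaces"
begin

(* Vector spaces over a field 'k are given by scalar multiplications
   sg :: 'k => 'g => 'g and sv :: 'k => 'v => 'v (library locale vector_space).
   n-ary maps g^n -> V are represented as functions on lists 'g list => 'v,
   only evaluated on lists of length n. *)

definition lie_algebra :: "('k::field \<Rightarrow> 'g::ab_group_add \<Rightarrow> 'g) \<Rightarrow> ('g \<Rightarrow> 'g \<Rightarrow> 'g) \<Rightarrow> bool" where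
  "lie_algebra sg br \<longleftrightarrow> vector_space sg
     \<and> (\<forall>x. Vector_Spaces.linear sg sg (br x))
     \<and> (\<forall>y. Vector_Spaces.linear sg sg (\<lambda>x. br x y))
     \<and> (\<forall>x. br x x = 0)
     \<and> (\<forall>x y z. br x (br y z) + br y (br z x) + br z (br x y) = 0)"

definition difference_lie_algebra :: "('k::field \<Rightarrow> 'g::ab_group_add \<Rightarrow> 'g) \<Rightarrow> ('g \<Rightarrow> 'g \<Rightarrow> 'g) \<Rightarrow> ('g \<Rightarrow> 'g) \<Rightarrow> bool" where
  "difference_lie_algebra sg br D \<longleftrightarrow> lie_algebra sg br
     \<and> Vector_Spaces.linear sg sg D
     \<and> (\<forall>x y. D (br x y) = br x (D y) - br y (D x) + br (D x) (D y))"

definition diff_representation ::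
  "('k::field \<Rightarrow> 'g::ab_group_add \<Rightarrow> 'g) \<Rightarrow> ('g \<Rightarrow> 'g \<Rightarrow> 'g) \<Rightarrow> ('g \<Rightarrow> 'g)
   \<Rightarrow> ('k \<Rightarrow> 'v::ab_group_add \<Rightarrow> 'v) \<Rightarrow> ('g \<Rightarrow> 'v \<Rightarrow> 'v) \<Rightarrow> ('v \<Rightarrow> 'v) \<Rightarrow> bool" where
  "diff_representation sg br D sv rho K \<longleftrightarrow> vector_space sv
     \<and> (\<forall>x. Vector_Spaces.linear sv sv (rho x))
     \<and> (\<forall>u. Vector_Spaces.linear sg sv (\<lambda>x. rho x u))
     \<and> (\<forall>x y u. rho (br x y) u = rho x (rho y u) - rho y (rho x u))
     \<and> Vector_Spaces.linear sv sv K
     \<and> (\<forall>x u. K (rho x u) = rho (D x) u + rho x (K u) + rho (D x) (K u))"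

definition alt_multilinear ::
  "('k::field \<Rightarrow> 'g::ab_group_add \<Rightarrow> 'g) \<Rightarrow> ('k \<Rightarrow> 'v::ab_group_add \<Rightarrow> 'v) \<Rightarrow> nat \<Rightarrow> ('g list \<Rightarrow> 'v) \<Rightarrow> bool" where
  "alt_multilinear sg sv n f \<longleftrightarrow>
     (\<forall>xs i. length xs = n \<longrightarrow> i < n \<longrightarrow> Vector_Spaces.linear sg sv (\<lambda>y. f (xs[i := y])))
     \<and> (\<forall>xs i j. length xs = n \<longrightarrow> i < j \<longrightarrow> j < n \<longrightarrow> xs ! i = xs ! j \<longrightarrow> f xs = 0)"

definition sgnv :: "nat \<Rightarrow> 'v::ab_group_add \<Rightarrow> 'v" where
  "sgnv k v = (if even k then v else - v)"

definition del :: "nat \<Rightarrow> 'a list \<Rightarrow> 'a list" where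
  "del i xs = take i xs @ drop (Suc i) xs"

(* Chevalley-Eilenberg differential with coefficients in rho (0-based indices:
   (-1)^(i+1) for 1-based i becomes (-1)^i, and (-1)^(i+j) is unchanged). *)
definition dCE :: "('g \<Rightarrow> 'v \<Rightarrow> 'v) \<Rightarrow> ('g \<Rightarrow> 'g \<Rightarrow> 'g) \<Rightarrow> ('g list \<Rightarrow> 'v::ab_group_add) \<Rightarrow> 'g list \<Rightarrow> 'v" where
  "dCE rho br f xs =
     (\<Sum>i<length xs. sgnv i (rho (xs ! i) (f (del i xs))))
   + (\<Sum>(i, j)\<in>{(i, j). i < j \<and> j < length xs}.
        sgnv (i + j) (f (br (xs ! i) (xs ! j) # del i (del j xs))))"

definition partial_op :: "('g \<Rightarrow> 'v \<Rightarrow> 'v) \<Rightarrow> ('g \<Rightarrow> 'g \<Rightarrow> 'g) \<Rightarrow> ('g \<Rightarrow> 'g) \<Rightarrow> ('g list \<Rightarrow> 'v::ab_group_add) \<Rightarrow> 'g list \<Rightarrow> 'v" where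
  "partial_op rho br D theta = dCE (\<lambda>x u. rho x u + rho (D x) u) br theta"

definition T_op :: "('g \<Rightarrow> 'g) \<Rightarrow> ('v \<Rightarrow> 'v) \<Rightarrow> ('g list \<Rightarrow> 'v::ab_group_add) \<Rightarrow> 'g list \<Rightarrow> 'v" where
  "T_op D K f xs = sgnv (length xs)
     ((\<Sum>S\<in>{S. S \<subseteq> {..<length xs} \<and> S \<noteq> {}}.
         f (map (\<lambda>i. if i \<in> S then D (xs ! i) else xs ! i) [0..<length xs]))
      - K (f xs))"

(* the cochain space C^n: for n = 1 the second component is absent (taken to be 0) *)
definition cochain ::
  "('k::field \<Rightarrow> 'g::ab_group_add \<Rightarrow> 'g) \<Rightarrow> ('k \<Rightarrow> 'v::ab_group_add \<Rightarrow> 'v) \<Rightarrow> nat \<Rightarrow> ('g list \<Rightarrow> 'v) \<times> ('g list \<Rightarrow> 'v) \<Rightarrow> bool" where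
  "cochain sg sv n c \<longleftrightarrow> n \<ge> 1 \<and> alt_multilinear sg sv n (fst c)
     \<and> (if n = 1 then snd c = (\<lambda>_. 0) else alt_multilinear sg sv (n - 1) (snd c))"

definition delta :: "('g \<Rightarrow> 'v \<Rightarrow> 'v) \<Rightarrow> ('g \<Rightarrow> 'g \<Rightarrow> 'g) \<Rightarrow> ('g \<Rightarrow> 'g) \<Rightarrow> ('v \<Rightarrow> 'v)
    \<Rightarrow> ('g list \<Rightarrow> 'v::ab_group_add) \<times> ('g list \<Rightarrow> 'v) \<Rightarrow> ('g list \<Rightarrow> 'v) \<times> ('g list \<Rightarrow> 'v)" where
  "delta rho br D K c = (dCE rho br (fst c), \<lambda>xs. partial_op rho br D (snd c) xs + T_op D K (fst c) xs)"

end

theory Submission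
  imports Defs
begin

text \<open>
  Expanded through the positions of the
  deleted arguments, d_CE(d_CE f) falls into six families of terms, which cancel by the
  representation identity, by parity of the signs, by the Jacobi identity and by antisymmetry
  of f.

  The second component is \<partial>(\<partial>\<theta>) + (\<partial>(T f) + T(d_CE f)). The operator \<partial> is the
  Chevalley-Eilenberg differential for the twisted action x \<mapsto> \<rho>(x + D x), so \<partial>(\<partial>\<theta>) = 0 by
  the first part. By multi-additivity the sum over nonempty subsets in T collapses to
  T g = (-1)^n (g \<circ> \<phi> - \<Phi> \<circ> g) with \<phi> = id + D and \<Phi> = id + K. The difference Lie algebra
  axiom says that \<phi> preserves the bracket and the axiom for K says that \<Phi> intertwines \<rho> with
  \<rho> \<circ> \<phi>; hence \<partial>(T f) = (-1)^n (d_CE f \<circ> \<phi> - \<Phi> \<circ> d_CE f) = - T(d_CE f).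
\<close>

lemma sgnv_0 [simp]: "sgnv 0 v = v"
  by (simp add: sgnv_def)

lemma sgnv_Suc: "sgnv (Suc k) v = - sgnv k v"
  by (simp add: sgnv_def)

lemma sgnv_Suc_Suc [simp]: "sgnv (Suc (Suc k)) v = sgnv k v"
  by (simp add: sgnv_def)

lemma sgnv_sgnv [simp]: "sgnv a (sgnv b v) = sgnv (a + b) v"
  by (simp add: sgnv_def)

lemma sgnv_zero [simp]: "sgnv k 0 = 0"
  by (simp add: sgnv_def)

lemma additive_sgnv: "additive (sgnv k)"
  by unfold_locales (simp add: sgnv_def)

lemmas sgnv_add = additive.add[OF additive_sgnv]
  and sgnv_diff = additive.diff[OF additive_sgnv]
  and sgnv_minus = additive.minus[OF additive_sgnv]
  and sgnv_sum = additive.sum[OF additive_sgnv]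

lemma sgnv_parity_cong: "even a = even b \<Longrightarrow> sgnv a v = sgnv b v"
  by (simp add: sgnv_def)

lemma sgnv_add_odd: "odd (a + b) \<Longrightarrow> sgnv a v + sgnv b v = 0"
  by (auto simp: sgnv_def)

lemma additive_add: "additive F \<Longrightarrow> additive G \<Longrightarrow> additive (\<lambda>w. F w + G w)"
  unfolding additive_def by (simp add: add_ac)

lemma additive_sum: "(\<And>i. i \<in> A \<Longrightarrow> additive (F i)) \<Longrightarrow> additive (\<lambda>w. \<Sum>i\<in>A. F i w)"
  unfolding additive_def by (simp add: sum.distrib)

lemma additive_comp: "additive h \<Longrightarrow> additive F \<Longrightarrow> additive (\<lambda>w. h (F w))"
  unfolding additive_def by simp

lemma additive_if_0: "(c \<Longrightarrow> additive F) \<Longrightarrow> additive (\<lambda>w. if c then F w else 0)"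
  unfolding additive_def by simp

lemma linear_imp_additive: "Vector_Spaces.linear s1 s2 h \<Longrightarrow> additive h"
  unfolding linear_iff additive_def by blast

section \<open>Lists with several entries deleted\<close>

text \<open>Deleting the entries at the positions in R turns xs into nths xs (- R); the entry at a
  kept position m \<in> A of xs sits at index rank A m of nths xs A.\<close>

definition rank :: "nat set \<Rightarrow> nat \<Rightarrow> nat" where
  "rank A m = card {j \<in> A. j < m}"

lemma rank_strict_mono:
  assumes "a < b" "a \<in> A"
  shows "rank A a < rank A b"
proof -
  have "{j \<in> A. j < b} = insert a {j \<in> A. j < a} \<union> {j \<in> A. a < j \<and> j < b}"
    using assms by auto
  moreover have "finite {j \<in> A. a < j \<and> j < b}" by auto
  ultimately have "card {j \<in> A. j < b} \<ge> card (insert a {j \<in> A. j < a})"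
    by (intro card_mono) auto
  then show ?thesis unfolding rank_def by (simp add: card_insert_if)
qed

lemma rank_less_iff: "a \<in> A \<Longrightarrow> b \<in> A \<Longrightarrow> rank A a < rank A b \<longleftrightarrow> a < b"
  by (metis linorder_neqE_nat rank_strict_mono less_asym less_irrefl)

lemma rank_eq_iff: "a \<in> A \<Longrightarrow> b \<in> A \<Longrightarrow> rank A a = rank A b \<longleftrightarrow> a = b"
  by (metis linorder_neqE_nat rank_strict_mono less_irrefl)

lemma rank_Diff_singleton: "rank (A - {a}) m = (if a \<in> A \<and> a < m then rank A m - 1 else rank A m)"
proof -
  have "{j \<in> A - {a}. j < m} = {j \<in> A. j < m} - {a}" by auto
  then show ?thesis unfolding rank_def by (auto simp: card_Diff_singleton_if)
qed

lemma rank_UNIV [simp]: "rank UNIV m = m"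
  unfolding rank_def by simp

lemma nths_singleton_index: "i < length xs \<Longrightarrow> nths xs {i} = [xs ! i]"
proof (induction xs arbitrary: i)
  case Nil then show ?case by simp
next
  case (Cons x xs) then show ?case by (cases i) (auto simp: nths_Cons)
qed

lemma length_nths_card_Int: "length (nths xs A) = card ({..<length xs} \<inter> A)"
  by (simp add: length_nths Int_def conj_commute lessThan_def)

lemma rank_less_length_nths:
  assumes "m \<in> A" "m < length xs"
  shows "rank A m < length (nths xs A)"
proof -
  have "{j \<in> A. j < m} \<subset> {i. i < length xs \<and> i \<in> A}" using assms by auto
  then show ?thesis unfolding rank_def length_nths by (intro psubset_card_mono) auto
qed

lemma nth_nths_rank:
  assumes "m \<in> A" "m < length xs"
  shows "nths xs A ! rank A m = xs ! m"
proof -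
  have "nths (nths xs A) {rank A m} = nths xs {i \<in> A. rank A i = rank A m}"
    unfolding nths_nths rank_def by simp
  also have "{i \<in> A. rank A i = rank A m} = {m}" using assms rank_eq_iff by blast
  finally show ?thesis
    using assms by (simp add: nths_singleton_index rank_less_length_nths)
qed

lemma del_eq_nths: "del i xs = nths xs (- {i})"
proof (induction xs arbitrary: i)
  case Nil then show ?case by (simp add: del_def)
next
  case (Cons x xs)
  have "{j. Suc j \<in> - {Suc k}} = - {k}" for k by auto
  with Cons show ?case by (cases i) (auto simp: del_def nths_Cons nths_all)
qed

lemma del_nths_rank:
  assumes "m \<in> A"
  shows "del (rank A m) (nths xs A) = nths xs (A - {m})"
proof -
  have "{i \<in> A. \<exists>j \<in> - {rank A m}. rank A i = j} = A - {m}"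
    using assms rank_eq_iff by auto
  then show ?thesis unfolding del_eq_nths nths_nths by (simp add: rank_def)
qed

lemma bij_betw_rank: "bij_betw (rank A) ({..<length xs} \<inter> A) {..<length (nths xs A)}"
proof -
  have inj: "inj_on (rank A) ({..<length xs} \<inter> A)"
    by (auto intro: inj_onI simp: rank_eq_iff)
  moreover have "rank A ` ({..<length xs} \<inter> A) \<subseteq> {..<length (nths xs A)}"
    by (auto intro: rank_less_length_nths)
  moreover have "card (rank A ` ({..<length xs} \<inter> A)) = card {..<length (nths xs A)}"
    using card_image[OF inj] by (simp add: length_nths_card_Int)
  ultimately show ?thesis
    unfolding bij_betw_def by (metis card_subset_eq finite_lessThan)
qed

lemma sum_nths_reindex:
  "(\<Sum>k<length (nths xs A). H k) = (\<Sum>m<length xs. if m \<in> A then H (rank A m) else 0)"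
proof -
  have "(\<Sum>k<length (nths xs A). H k) = (\<Sum>m\<in>{..<length xs} \<inter> A. H (rank A m))"
    by (rule sum.reindex_bij_betw[OF bij_betw_rank, symmetric])
  also have "\<dots> = (\<Sum>m<length xs. if m \<in> A then H (rank A m) else 0)"
    by (simp add: sum.inter_restrict)
  finally show ?thesis .
qed

lemma length_nths_Compl:
  "finite S \<Longrightarrow> S \<subseteq> {..<length xs} \<Longrightarrow> length (nths xs (- S)) = length xs - card S"
  by (simp add: length_nths_card_Int Diff_eq[symmetric] card_Diff_subset)

lemma rank_Compl_singleton: "rank (- {a}) m = (if a < m then m - 1 else m)"
  using rank_Diff_singleton[of UNIV a m] by (simp add: Compl_eq_Diff_UNIV)

lemma rank_Compl_doubleton:
  "a \<noteq> b \<Longrightarrow> rank (- {a, b}) m = m - (if a < m then 1 else 0) - (if b < m then 1 else 0)"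
proof -
  assume "a \<noteq> b"
  have "- {a, b} = - {b} - {a}" by auto
  with \<open>a \<noteq> b\<close> show ?thesis by (simp add: rank_Diff_singleton rank_Compl_singleton)
qed

lemma del_nths_Diff_rank:
  assumes "a < b" "a \<in> A"
  shows "del (rank A a) (nths xs (A - {b})) = nths xs (A - {b} - {a})"
proof -
  have "rank A a = rank (A - {b}) a" using assms by (simp add: rank_Diff_singleton)
  then show ?thesis using assms by (simp add: del_nths_rank)
qed

lemma sum_upper_pairs_nths_reindex:
  "(\<Sum>i<length (nths xs A). \<Sum>j<length (nths xs A). if i < j then H i j else 0)
   = (\<Sum>a<length xs. \<Sum>b<length xs. if a \<in> A \<and> b \<in> A \<and> a < b then H (rank A a) (rank A b) else 0)"
  unfolding sum_nths_reindex
  by (auto intro!: sum.cong simp: rank_less_iff)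

lemma del_Cons_0 [simp]: "del 0 (u # ys) = ys"
  and del_Cons_Suc [simp]: "del (Suc k) (u # ys) = u # del k ys"
  by (simp_all add: del_def)

lemma length_del: "i < length xs \<Longrightarrow> length (del i xs) = length xs - 1"
  by (simp add: del_def)

lemma del_list_update_same: "del k (xs[k := w]) = del k xs"
  by (simp add: del_def take_update_cancel drop_update_cancel)

lemma del_list_update:
  assumes "k < length xs" "i < length xs" "i \<noteq> k"
  shows "del i (xs[k := w]) = (del i xs)[(if k < i then k else k - 1) := w]"
proof (rule nth_equalityI)
  fix j assume "j < length (del i (xs[k := w]))"
  with assms show "del i (xs[k := w]) ! j = (del i xs)[(if k < i then k else k - 1) := w] ! j"
    by (auto simp: del_def nth_append nth_list_update min_def)
qed (use assms in \<open>simp add: length_del\<close>)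

section \<open>The square of the Chevalley-Eilenberg differential\<close>

lemma sum_upper_pairs_eq_box:
  "(\<Sum>(i, j)\<in>{(i, j). i < j \<and> j < (N::nat)}. F i j) = (\<Sum>i<N. \<Sum>j<N. if i < j then F i j else 0)"
proof -
  have "(\<Sum>i<N. \<Sum>j<N. if i < j then F i j else 0)
      = (\<Sum>(i, j)\<in>{..<N} \<times> {..<N}. if i < j then F i j else 0)"
    by (simp add: sum.cartesian_product)
  also have "\<dots> = (\<Sum>(i, j)\<in>{(i, j). i < j \<and> j < N}. F i j)"
    by (rule sum.mono_neutral_cong_right) (auto split: if_splits)
  finally show ?thesis by simp
qed

lemma dCE_eq_box_sums:
  "dCE r br g xs = (\<Sum>i<length xs. sgnv i (r (xs ! i) (g (del i xs))))
   + (\<Sum>i<length xs. \<Sum>j<length xs. if i < j then sgnv (i + j) (g (br (xs ! i) (xs ! j) # del i (del j xs))) else 0)"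
  unfolding dCE_def sum_upper_pairs_eq_box ..

lemma dCE_nths:
  "dCE r br g (nths xs (- R))
   = (\<Sum>m<length xs. if m \<notin> R then sgnv (rank (- R) m) (r (xs ! m) (g (nths xs (- insert m R)))) else 0)
   + (\<Sum>a<length xs. \<Sum>b<length xs. if a \<notin> R \<and> b \<notin> R \<and> a < b then
        sgnv (rank (- R) a + rank (- R) b) (g (br (xs ! a) (xs ! b) # nths xs (- insert a (insert b R)))) else 0)"
  unfolding dCE_eq_box_sums sum_upper_pairs_nths_reindex
  unfolding sum_nths_reindex
  by (intro arg_cong2[where f = "(+)"] sum.cong refl)
    (auto intro!: sum.cong simp: nth_nths_rank del_nths_rank del_nths_Diff_rank Compl_insert)

lemma dCE_Cons:
  "dCE r br g (u # ys) = r u (g ys)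
   + (\<Sum>k<length ys. sgnv (Suc k) (r (ys ! k) (g (u # del k ys))))
   + (\<Sum>l<length ys. sgnv (Suc l) (g (br u (ys ! l) # del l ys)))
   + (\<Sum>k<length ys. \<Sum>l<length ys. if k < l then sgnv (k + l) (g (br (ys ! k) (ys ! l) # u # del k (del l ys))) else 0)"
  unfolding dCE_eq_box_sums length_Cons sum.lessThan_Suc_shift
  by (simp add: sum.distrib add_ac del: sum.lessThan_Suc cong: if_cong)

lemma dCE_Cons_nths:
  "dCE r br g (u # nths xs (- R)) = r u (g (nths xs (- R)))
   + (\<Sum>m<length xs. if m \<notin> R then sgnv (Suc (rank (- R) m)) (r (xs ! m) (g (u # nths xs (- insert m R)))) else 0)
   + (\<Sum>m<length xs. if m \<notin> R then sgnv (Suc (rank (- R) m)) (g (br u (xs ! m) # nths xs (- insert m R))) else 0)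
   + (\<Sum>a<length xs. \<Sum>b<length xs. if a \<notin> R \<and> b \<notin> R \<and> a < b then
        sgnv (rank (- R) a + rank (- R) b) (g (br (xs ! a) (xs ! b) # u # nths xs (- insert a (insert b R)))) else 0)"
  unfolding dCE_Cons sum_upper_pairs_nths_reindex
  unfolding sum_nths_reindex
  by (intro arg_cong2[where f = "(+)"] sum.cong refl)
    (auto intro!: sum.cong simp: nth_nths_rank del_nths_rank del_nths_Diff_rank Compl_insert)

lemma sum_offdiag_eq_sum_upper_pairs:
  fixes P :: "nat \<Rightarrow> nat \<Rightarrow> 'v::ab_group_add"
  shows "(\<Sum>i<N. \<Sum>m<N. if m \<noteq> i then P i m else 0) = (\<Sum>a<N. \<Sum>b<N. if a < b then P a b + P b a else 0)"
proof -
  have "(\<Sum>i<N. \<Sum>m<N. if m \<noteq> i then P i m else 0)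
     = (\<Sum>i<N. \<Sum>m<N. if i < m then P i m else 0) + (\<Sum>i<N. \<Sum>m<N. if m < i then P i m else 0)"
    by (simp add: sum.distrib[symmetric]) (intro sum.cong refl, auto)
  also have "(\<Sum>i<N. \<Sum>m<N. if m < i then P i m else 0) = (\<Sum>m<N. \<Sum>i<N. if m < i then P i m else 0)"
    by (rule sum.swap)
  finally show ?thesis
    by (simp add: sum.distrib[symmetric]) (intro sum.cong refl, auto)
qed

lemma sum_lessThan_rotate3:
  "(\<Sum>a<N. \<Sum>b<N. \<Sum>m<N. H a b m) = (\<Sum>m<N. \<Sum>a<N. \<Sum>b<(N::nat). H a b m)"
proof -
  have "(\<Sum>a<N. \<Sum>b<N. \<Sum>m<N. H a b m) = (\<Sum>a<N. \<Sum>m<N. \<Sum>b<N. H a b m)"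
    by (intro sum.cong refl sum.swap)
  also have "\<dots> = (\<Sum>m<N. \<Sum>a<N. \<Sum>b<N. H a b m)"
    by (rule sum.swap)
  finally show ?thesis .
qed

lemma sum_distinct_triples_eq_sum_ordered:
  fixes G :: "nat \<Rightarrow> nat \<Rightarrow> nat \<Rightarrow> 'v::ab_group_add"
  shows "(\<Sum>a<N. \<Sum>b<N. \<Sum>m<N. if a < b \<and> m \<noteq> a \<and> m \<noteq> b then G a b m else 0)
    = (\<Sum>p<N. \<Sum>q<N. \<Sum>t<N. if p < q \<and> q < t then G q t p + G p t q + G p q t else 0)"
proof -
  have "(\<Sum>a<N. \<Sum>b<N. \<Sum>m<N. if a < b \<and> m \<noteq> a \<and> m \<noteq> b then G a b m else 0)
     = (\<Sum>a<N. \<Sum>b<N. \<Sum>m<N. if m < a \<and> a < b then G a b m else 0)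
     + (\<Sum>a<N. \<Sum>b<N. \<Sum>m<N. if a < m \<and> m < b then G a b m else 0)
     + (\<Sum>a<N. \<Sum>b<N. \<Sum>m<N. if a < b \<and> b < m then G a b m else 0)"
    by (simp add: sum.distrib[symmetric]) (intro sum.cong refl, auto)
  also have "(\<Sum>a<N. \<Sum>b<N. \<Sum>m<N. if m < a \<and> a < b then G a b m else 0)
     = (\<Sum>m<N. \<Sum>a<N. \<Sum>b<N. if m < a \<and> a < b then G a b m else 0)"
    by (rule sum_lessThan_rotate3)
  also have "(\<Sum>a<N. \<Sum>b<N. \<Sum>m<N. if a < m \<and> m < b then G a b m else 0)
     = (\<Sum>a<N. \<Sum>m<N. \<Sum>b<N. if a < m \<and> m < b then G a b m else 0)"
    by (intro sum.cong refl sum.swap)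
  finally show ?thesis
    by (simp add: sum.distrib[symmetric]) (intro sum.cong refl, auto)
qed

lemma sum_disjoint_pairs_symmetrize:
  fixes W :: "nat \<Rightarrow> nat \<Rightarrow> nat \<Rightarrow> nat \<Rightarrow> 'v::ab_group_add"
  defines "C a b c d \<equiv> a < b \<and> c \<noteq> a \<and> c \<noteq> b \<and> d \<noteq> a \<and> d \<noteq> b \<and> c < d"
  shows "(\<Sum>a<N. \<Sum>b<N. \<Sum>c<N. \<Sum>d<N. if C a b c d then W a b c d else 0)
    = (\<Sum>a<N. \<Sum>b<N. \<Sum>c<N. \<Sum>d<N. if C a b c d \<and> a < c then W a b c d + W c d a b else 0)"
proof -
  have "(\<Sum>a<N. \<Sum>b<N. \<Sum>c<N. \<Sum>d<N. if C a b c d then W a b c d else 0)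
    = (\<Sum>a<N. \<Sum>b<N. \<Sum>c<N. \<Sum>d<N. if C a b c d \<and> a < c then W a b c d else 0)
     + (\<Sum>a<N. \<Sum>b<N. \<Sum>c<N. \<Sum>d<N. if C a b c d \<and> c < a then W a b c d else 0)"
    unfolding C_def by (simp add: sum.distrib[symmetric]) (intro sum.cong refl, auto)
  also have "(\<Sum>a<N. \<Sum>b<N. \<Sum>c<N. \<Sum>d<N. if C a b c d \<and> c < a then W a b c d else 0)
     = (\<Sum>c<N. \<Sum>d<N. \<Sum>a<N. \<Sum>b<N. if C a b c d \<and> c < a then W a b c d else 0)"
  proof -
    have "(\<Sum>a<N. \<Sum>b<N. \<Sum>c<N. \<Sum>d<N. H a b c d) = (\<Sum>c<N. \<Sum>d<N. \<Sum>a<N. \<Sum>b<N. H a b c d)"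
      for H :: "nat \<Rightarrow> nat \<Rightarrow> nat \<Rightarrow> nat \<Rightarrow> 'v"
      by (simp only: sum_lessThan_rotate3[where H = "\<lambda>c d b. H _ b c d", symmetric]
          sum_lessThan_rotate3[where H = "\<lambda>c d a. \<Sum>b<N. H a b c d", symmetric])
    then show ?thesis .
  qed
  finally show ?thesis
    unfolding C_def by (simp add: sum.distrib[symmetric]) (intro sum.cong refl, auto)
qed

context
  fixes r :: "'g::ab_group_add \<Rightarrow> 'v::ab_group_add \<Rightarrow> 'v" and br :: "'g \<Rightarrow> 'g \<Rightarrow> 'g"
    and f :: "'g list \<Rightarrow> 'v" and n :: nat and xs :: "'g list"
  assumes r_additive: "\<And>x. additive (r x)"
    and r_bracket: "\<And>x y u. r (br x y) u = r x (r y u) - r y (r x u)"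
    and jacobi: "\<And>p q t. br (br p q) t - br (br p t) q + br (br q t) p = 0"
    and f_additive: "\<And>R. length R + 1 = n \<Longrightarrow> additive (\<lambda>u. f (u # R))"
    and f_swap: "\<And>u v R. length R + 2 = n \<Longrightarrow> f (u # v # R) = - f (v # u # R)"
    and length_xs: "length xs = n + 2"
begin

lemma
  shows r_zero: "r x 0 = 0" and r_sum: "r x (sum g A) = (\<Sum>i\<in>A. r x (g i))"
    and r_sgnv: "r x (sgnv k u) = sgnv k (r x u)"
  using additive.zero[OF r_additive] additive.sum[OF r_additive]
  by (auto simp: sgnv_def additive.minus[OF r_additive])

lemma dCE_sq_bracket_terms_cancel:
  assumes "a < b"
  shows "sgnv (a + rank (- {a}) b) (r (xs ! a) (r (xs ! b) (f (nths xs (- {b, a})))))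
    + sgnv (b + rank (- {b}) a) (r (xs ! b) (r (xs ! a) (f (nths xs (- {a, b})))))
    + sgnv (a + b) (r (br (xs ! a) (xs ! b)) (f (nths xs (- {a, b})))) = 0"
proof -
  have sign_a: "sgnv (a + rank (- {a}) b) v = - sgnv (a + b) v" for v
    using assms by (cases b) (auto simp: rank_Compl_singleton sgnv_Suc)
  have sign_b: "sgnv (b + rank (- {b}) a) v = sgnv (a + b) v" for v
    using assms by (simp add: rank_Compl_singleton add.commute)
  show ?thesis
    unfolding sign_a sign_b r_bracket sgnv_diff by (simp add: insert_commute)
qed

lemma dCE_sq_action_terms_cancel:
  assumes "a < b" "m \<noteq> a" "m \<noteq> b"
  shows "sgnv (m + (rank (- {m}) a + rank (- {m}) b)) (r (xs ! m) (f (br (xs ! a) (xs ! b) # nths xs (- {a, b, m}))))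
    + sgnv (a + b + Suc (rank (- {a, b}) m)) (r (xs ! m) (f (br (xs ! a) (xs ! b) # nths xs (- {m, a, b})))) = 0"
proof -
  have "{m, a, b} = {a, b, m}" by auto
  moreover have "odd (m + (rank (- {m}) a + rank (- {m}) b) + (a + b + Suc (rank (- {a, b}) m)))"
    using assms by (simp add: rank_Compl_singleton rank_Compl_doubleton) presburger
  ultimately show ?thesis by (simp add: sgnv_add_odd)
qed

lemma dCE_sq_jacobi_terms_cancel:
  assumes "p < q" "q < t" "t < length xs"
  shows "sgnv (q + t + Suc (rank (- {q, t}) p)) (f (br (br (xs ! q) (xs ! t)) (xs ! p) # nths xs (- {p, q, t})))
    + sgnv (p + t + Suc (rank (- {p, t}) q)) (f (br (br (xs ! p) (xs ! t)) (xs ! q) # nths xs (- {q, p, t})))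
    + sgnv (p + q + Suc (rank (- {p, q}) t)) (f (br (br (xs ! p) (xs ! q)) (xs ! t) # nths xs (- {t, p, q}))) = 0"
proof -
  define h where "h u = sgnv (p + q + t + 1) (f (u # nths xs (- {p, q, t})))" for u
  have "length (nths xs (- {p, q, t})) + 1 = n"
    using assms length_xs by (simp add: length_nths_Compl)
  then have "additive h"
    unfolding h_def by unfold_locales (simp add: additive.add[OF f_additive] sgnv_add)
  then have "h (br (br (xs ! p) (xs ! q)) (xs ! t)) - h (br (br (xs ! p) (xs ! t)) (xs ! q))
      + h (br (br (xs ! q) (xs ! t)) (xs ! p)) = 0"
    by (metis additive.add additive.diff additive.zero jacobi)
  moreover have "{q, p, t} = {p, q, t}" "{t, p, q} = {p, q, t}" by auto
  moreover have signs: "sgnv (q + t + Suc (rank (- {q, t}) p)) v = sgnv (p + q + t + 1) v"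
    "sgnv (p + t + Suc (rank (- {p, t}) q)) v = - sgnv (p + q + t + 1) v"
    "sgnv (p + q + Suc (rank (- {p, q}) t)) v = sgnv (p + q + t + 1) v" for v
    using assms by (auto simp: rank_Compl_doubleton sgnv_def)
  ultimately show ?thesis
    unfolding h_def signs by (simp add: algebra_simps)
qed

lemma dCE_sq_swap_terms_cancel:
  assumes "a < b" "c < d" "c \<noteq> a" "c \<noteq> b" "d \<noteq> a" "d \<noteq> b" "b < length xs" "d < length xs"
  shows "sgnv (a + b + (rank (- {a, b}) c + rank (- {a, b}) d)) (f (br (xs ! c) (xs ! d) # br (xs ! a) (xs ! b) # nths xs (- {c, d, a, b})))
    + sgnv (c + d + (rank (- {c, d}) a + rank (- {c, d}) b)) (f (br (xs ! a) (xs ! b) # br (xs ! c) (xs ! d) # nths xs (- {a, b, c, d}))) = 0"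
proof -
  have "length (nths xs (- {a, b, c, d})) + 2 = n"
    using assms length_xs by (simp add: length_nths_Compl)
  moreover have "{c, d, a, b} = {a, b, c, d}" by auto
  moreover have sign: "sgnv (a + b + (rank (- {a, b}) c + rank (- {a, b}) d)) v
      = sgnv (c + d + (rank (- {c, d}) a + rank (- {c, d}) b)) v" for v
    using assms by (intro sgnv_parity_cong) (simp add: rank_Compl_doubleton, presburger)
  ultimately show ?thesis
    unfolding sign by (simp add: f_swap[of _ "br (xs ! c) (xs ! d)"] sgnv_minus)
qed

lemma dCE_dCE_eq_0: "dCE r br (dCE r br f) xs = 0"
proof -
  define N where "N = length xs"
  \<comment> \<open>P-terms come from the action part of the outer differential, Q-terms from its bracket part.\<close>
  define P1 where "P1 i m = sgnv (i + rank (- {i}) m) (r (xs ! i) (r (xs ! m) (f (nths xs (- {m, i})))))" for i m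
  define P2 where "P2 i c d = sgnv (i + (rank (- {i}) c + rank (- {i}) d))
    (r (xs ! i) (f (br (xs ! c) (xs ! d) # nths xs (- {c, d, i}))))" for i c d
  define Q3 where "Q3 a b = sgnv (a + b) (r (br (xs ! a) (xs ! b)) (f (nths xs (- {a, b}))))" for a b
  define Q4 where "Q4 a b m = sgnv (a + b + Suc (rank (- {a, b}) m))
    (r (xs ! m) (f (br (xs ! a) (xs ! b) # nths xs (- {m, a, b}))))" for a b m
  define Q5 where "Q5 a b m = sgnv (a + b + Suc (rank (- {a, b}) m))
    (f (br (br (xs ! a) (xs ! b)) (xs ! m) # nths xs (- {m, a, b})))" for a b m
  define Q6 where "Q6 a b c d = sgnv (a + b + (rank (- {a, b}) c + rank (- {a, b}) d))
    (f (br (xs ! c) (xs ! d) # br (xs ! a) (xs ! b) # nths xs (- {c, d, a, b})))" for a b c d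
  have outer: "dCE r br (dCE r br f) xs = (\<Sum>i<N. sgnv i (r (xs ! i) (dCE r br f (nths xs (- {i})))))
     + (\<Sum>a<N. \<Sum>b<N. if a < b then sgnv (a + b) (dCE r br f (br (xs ! a) (xs ! b) # nths xs (- {a, b}))) else 0)"
    using dCE_nths[of r br "dCE r br f" xs "{}"] unfolding N_def by (simp add: nths_all cong: if_cong)
  have inner_del: "sgnv i (r (xs ! i) (dCE r br f (nths xs (- {i}))))
     = (\<Sum>m<N. if m \<noteq> i then P1 i m else 0)
     + (\<Sum>c<N. \<Sum>d<N. if c \<noteq> i \<and> d \<noteq> i \<and> c < d then P2 i c d else 0)" for i
    unfolding dCE_nths P1_def P2_def N_def
    by (simp add: if_distrib[of "r _"] if_distrib[of "sgnv _"] r_zero r_sum r_sgnv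
        additive.add[OF r_additive] sgnv_add sgnv_sum cong: if_cong)
  have inner_bracket: "(if a < b then sgnv (a + b) (dCE r br f (br (xs ! a) (xs ! b) # nths xs (- {a, b}))) else 0)
     = (if a < b then Q3 a b else 0)
     + (\<Sum>m<N. if a < b \<and> m \<noteq> a \<and> m \<noteq> b then Q4 a b m else 0)
     + (\<Sum>m<N. if a < b \<and> m \<noteq> a \<and> m \<noteq> b then Q5 a b m else 0)
     + (\<Sum>c<N. \<Sum>d<N. if a < b \<and> c \<noteq> a \<and> c \<noteq> b \<and> d \<noteq> a \<and> d \<noteq> b \<and> c < d then Q6 a b c d else 0)" for a b
  proof (cases "a < b")
    case True
    then show ?thesis
      unfolding dCE_Cons_nths Q3_def Q4_def Q5_def Q6_def N_def
      by (simp add: if_distrib[of "sgnv _"] sgnv_add sgnv_sum cong: if_cong)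
  qed simp
  define S1 where "S1 = (\<Sum>i<N. \<Sum>m<N. if m \<noteq> i then P1 i m else 0)"
  define S2 where "S2 = (\<Sum>i<N. \<Sum>c<N. \<Sum>d<N. if c \<noteq> i \<and> d \<noteq> i \<and> c < d then P2 i c d else 0)"
  define S3 where "S3 = (\<Sum>a<N. \<Sum>b<N. if a < b then Q3 a b else 0)"
  define S4 where "S4 = (\<Sum>a<N. \<Sum>b<N. \<Sum>m<N. if a < b \<and> m \<noteq> a \<and> m \<noteq> b then Q4 a b m else 0)"
  define S5 where "S5 = (\<Sum>a<N. \<Sum>b<N. \<Sum>m<N. if a < b \<and> m \<noteq> a \<and> m \<noteq> b then Q5 a b m else 0)"
  define S6 where "S6 = (\<Sum>a<N. \<Sum>b<N. \<Sum>c<N. \<Sum>d<N.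
    if a < b \<and> c \<noteq> a \<and> c \<noteq> b \<and> d \<noteq> a \<and> d \<noteq> b \<and> c < d then Q6 a b c d else 0)"
  have "dCE r br (dCE r br f) xs = (S1 + S3) + (S2 + S4) + S5 + S6"
    unfolding outer inner_del inner_bracket S1_def S2_def S3_def S4_def S5_def S6_def
    by (simp only: sum.distrib add_ac)
  moreover have "S1 + S3 = 0"
  proof -
    have "S1 + S3 = (\<Sum>a<N. \<Sum>b<N. if a < b then P1 a b + P1 b a + Q3 a b else 0)"
      unfolding S1_def S3_def sum_offdiag_eq_sum_upper_pairs
      by (simp add: sum.distrib[symmetric]) (intro sum.cong refl, auto)
    also have "\<dots> = 0"
      using dCE_sq_bracket_terms_cancel unfolding P1_def Q3_def by (intro sum.neutral ballI) simp
    finally show ?thesis .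
  qed
  moreover have "S2 + S4 = 0"
  proof -
    have "S4 = (\<Sum>m<N. \<Sum>a<N. \<Sum>b<N. if a < b \<and> m \<noteq> a \<and> m \<noteq> b then Q4 a b m else 0)"
      unfolding S4_def by (rule sum_lessThan_rotate3)
    then have "S2 + S4 = (\<Sum>i<N. \<Sum>c<N. \<Sum>d<N. if c \<noteq> i \<and> d \<noteq> i \<and> c < d then P2 i c d + Q4 c d i else 0)"
      unfolding S2_def by (simp add: sum.distrib[symmetric]) (intro sum.cong refl, auto)
    also have "\<dots> = 0"
      using dCE_sq_action_terms_cancel unfolding P2_def Q4_def by (intro sum.neutral ballI) simp
    finally show ?thesis .
  qed
  moreover have "S5 = 0"
  proof -
    have "S5 = (\<Sum>p<N. \<Sum>q<N. \<Sum>t<N. if p < q \<and> q < t then Q5 q t p + Q5 p t q + Q5 p q t else 0)"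
      unfolding S5_def by (rule sum_distinct_triples_eq_sum_ordered)
    also have "\<dots> = 0"
      using dCE_sq_jacobi_terms_cancel unfolding Q5_def N_def by (intro sum.neutral ballI) simp
    finally show ?thesis .
  qed
  moreover have "S6 = 0"
  proof -
    have "S6 = (\<Sum>a<N. \<Sum>b<N. \<Sum>c<N. \<Sum>d<N.
        if (a < b \<and> c \<noteq> a \<and> c \<noteq> b \<and> d \<noteq> a \<and> d \<noteq> b \<and> c < d) \<and> a < c
        then Q6 a b c d + Q6 c d a b else 0)"
      unfolding S6_def by (rule sum_disjoint_pairs_symmetrize)
    also have "\<dots> = 0"
      using dCE_sq_swap_terms_cancel unfolding Q6_def N_def by (intro sum.neutral ballI) simp
    finally show ?thesis .
  qed
  ultimately show ?thesis by simp
qed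

end

section \<open>Multi-additive cochains and the operator T\<close>

definition slotwise_additive :: "nat \<Rightarrow> ('g::ab_group_add list \<Rightarrow> 'v::ab_group_add) \<Rightarrow> bool" where
  "slotwise_additive n g \<longleftrightarrow> (\<forall>ys k. length ys = n \<longrightarrow> k < n \<longrightarrow> additive (\<lambda>w. g (ys[k := w])))"

lemma slotwise_additiveD:
  "slotwise_additive n g \<Longrightarrow> length ys = n \<Longrightarrow> k < n \<Longrightarrow> additive (\<lambda>w. g (ys[k := w]))"
  unfolding slotwise_additive_def by blast

lemma slotwise_additive_Cons:
  "slotwise_additive n g \<Longrightarrow> length R + 1 = n \<Longrightarrow> additive (\<lambda>w. g (w # R))"
  using slotwise_additiveD[of n g "0 # R" 0] by simp

lemma alt_multilinear_slotwise_additive: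
  "alt_multilinear sg sv n g \<Longrightarrow> slotwise_additive n g"
  unfolding alt_multilinear_def slotwise_additive_def by (blast intro: linear_imp_additive)

lemma alt_multilinear_swap:
  fixes g :: "'g::ab_group_add list \<Rightarrow> 'v::ab_group_add"
  assumes g: "alt_multilinear sg sv n g" and len: "length R + 2 = n"
  shows "g (u # v # R) = - g (v # u # R)"
proof -
  have diag: "g (w # w # R) = 0" for w
  proof -
    have "\<forall>xs i j. length xs = n \<longrightarrow> i < j \<longrightarrow> j < n \<longrightarrow> xs ! i = xs ! j \<longrightarrow> g xs = 0"
      using g unfolding alt_multilinear_def by blast
    from this[rule_format, of "w # w # R" 0 1] show ?thesis using len by simp
  qed
  have first: "additive (\<lambda>w. g (w # y # R))" for y
    using slotwise_additive_Cons[OF alt_multilinear_slotwise_additive[OF g], of "y # R"] len by simp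
  have second: "additive (\<lambda>w. g (y # w # R))" for y
    using slotwise_additiveD[OF alt_multilinear_slotwise_additive[OF g], of "y # 0 # R" 1] len by simp
  have "g ((u + v) # (u + v) # R) = g (u # u # R) + g (u # v # R) + (g (v # u # R) + g (v # v # R))"
    by (simp add: additive.add[OF first] additive.add[OF second])
  then show ?thesis
    by (simp add: diag eq_neg_iff_add_eq_0)
qed

lemma slotwise_additive_dCE:
  fixes r :: "'g::ab_group_add \<Rightarrow> 'v::ab_group_add \<Rightarrow> 'v"
  assumes r_additive: "\<And>x. additive (r x)"
    and r_additive_left: "\<And>u. additive (\<lambda>x. r x u)"
    and br_additive: "\<And>z. additive (br z)" "\<And>z. additive (\<lambda>x. br x z)"
    and f: "slotwise_additive n f"
  shows "slotwise_additive (Suc n) (dCE r br f)"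
  unfolding slotwise_additive_def
proof (intro allI impI)
  fix ys :: "'g list" and k assume len: "length ys = Suc n" and k: "k < Suc n"
  have action_term: "additive (\<lambda>w. sgnv i (r (ys[k := w] ! i) (f (del i (ys[k := w])))))"
    if i: "i < Suc n" for i
  proof (cases "i = k")
    case True
    then show ?thesis
      using k len r_additive_left
      by (simp add: del_list_update_same additive_comp[OF additive_sgnv])
  next
    case False
    let ?k' = "if k < i then k else k - 1"
    have "del i (ys[k := w]) = (del i ys)[?k' := w]" for w
      using False i k len by (intro del_list_update) auto
    moreover have "additive (\<lambda>w. f ((del i ys)[?k' := w]))"
      using False i k len by (intro slotwise_additiveD[OF f]) (auto simp: length_del)
    ultimately show ?thesis
      using False by (simp add: additive_comp[OF additive_sgnv] additive_comp[OF r_additive])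
  qed
  have bracket_term:
    "additive (\<lambda>w. f (br (ys[k := w] ! i) (ys[k := w] ! j) # del i (del j (ys[k := w]))))"
    if ij: "i < j" "j < Suc n" for i j
  proof -
    have len': "length (del i (del j ys)) + 1 = n" using ij len by (simp add: length_del)
    consider "k = i" | "k = j" | "k \<noteq> i" "k \<noteq> j" by blast
    then show ?thesis
    proof cases
      case 1
      then have "del i (del j (ys[k := w])) = del i (del j ys)" for w
        using ij len by (simp add: del_list_update del_list_update_same)
      then show ?thesis
        using 1 ij len by (simp add: additive_comp[OF slotwise_additive_Cons[OF f len'] br_additive(2)])
    next
      case 2
      then show ?thesis
        using ij len by (simp add: del_list_update_same additive_comp[OF slotwise_additive_Cons[OF f len'] br_additive(1)])
    next
      case 3
      let ?k1 = "if k < j then k else k - 1"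
      let ?k2 = "if ?k1 < i then ?k1 else ?k1 - 1"
      have "del i (del j (ys[k := w])) = (del i (del j ys))[?k2 := w]" for w
        using 3 ij k len by (simp add: del_list_update length_del)
      moreover have "additive (\<lambda>w. f ((br (ys ! i) (ys ! j) # del i (del j ys))[Suc ?k2 := w]))"
        using 3 ij k len len' by (intro slotwise_additiveD[OF f]) (auto simp: length_del)
      ultimately show ?thesis
        using 3 by simp
    qed
  qed
  show "additive (\<lambda>w. dCE r br f (ys[k := w]))"
    unfolding dCE_eq_box_sums length_list_update len
    by (intro additive_add additive_sum action_term additive_if_0
        additive_comp[OF additive_sgnv bracket_term]) auto
qed

lemma slotwise_additive_expand:
  assumes g: "slotwise_additive n g"
  shows "g (map (\<lambda>i. a i + b i) [0..<n]) = (\<Sum>S\<in>Pow {..<n}. g (map (\<lambda>i. if i \<in> S then b i else a i) [0..<n]))"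
proof -
  define L where "L m S = map (\<lambda>i. if i < m then (if i \<in> S then b i else a i) else a i + b i) [0..<n]" for m S
  have expand: "(\<Sum>S\<in>Pow {..<m}. g (L m S)) = g (L 0 {})" if "m \<le> n" for m
    using that
  proof (induction m)
    case (Suc m)
    have split: "g (L (Suc m) S) + g (L (Suc m) (insert m S)) = g (L m S)" if "S \<subseteq> {..<m}" for S
    proof -
      have "L (Suc m) S = (L m S)[m := a m]" "L (Suc m) (insert m S) = (L m S)[m := b m]"
        "L m S = (L m S)[m := a m + b m]"
        unfolding L_def using that Suc.prems by (auto intro!: nth_equalityI simp: nth_list_update)
      moreover have "additive (\<lambda>w. g ((L m S)[m := w]))"
        using Suc.prems by (intro slotwise_additiveD[OF g]) (auto simp: L_def)
      note additive.add[OF this, of "a m" "b m"]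
      ultimately show ?thesis by simp
    qed
    have "Pow {..<m} \<inter> insert m ` Pow {..<m} = {}" by auto
    moreover have "inj_on (insert m) (Pow {..<m})"
      by (rule inj_onI) (metis Pow_iff insert_ident lessThan_iff less_irrefl subset_iff)
    ultimately have "(\<Sum>S\<in>Pow {..<Suc m}. g (L (Suc m) S))
        = (\<Sum>S\<in>Pow {..<m}. g (L (Suc m) S)) + (\<Sum>S\<in>Pow {..<m}. g (L (Suc m) (insert m S)))"
      by (simp add: lessThan_Suc Pow_insert sum.union_disjoint sum.reindex)
    also have "\<dots> = (\<Sum>S\<in>Pow {..<m}. g (L m S))"
      by (simp add: sum.distrib[symmetric] split)
    finally show ?case using Suc by simp
  qed simp
  have "L n S = map (\<lambda>i. if i \<in> S then b i else a i) [0..<n]" for S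
    unfolding L_def by (rule map_cong) auto
  moreover have "L 0 {} = map (\<lambda>i. a i + b i) [0..<n]"
    unfolding L_def by simp
  ultimately show ?thesis
    using expand[of n] by simp
qed

lemma T_op_eq:
  assumes "slotwise_additive (length xs) g"
  shows "T_op D K g xs = sgnv (length xs) (g (map (\<lambda>x. x + D x) xs) - (g xs + K (g xs)))"
proof -
  let ?n = "length xs" and ?y = "\<lambda>S. map (\<lambda>i. if i \<in> S then D (xs ! i) else xs ! i) [0..<length xs]"
  have "map (\<lambda>x. x + D x) xs = map (\<lambda>i. xs ! i + D (xs ! i)) [0..<?n]"
    by (rule nth_equalityI) auto
  then have "g (map (\<lambda>x. x + D x) xs) = (\<Sum>S\<in>Pow {..<?n}. g (?y S))"
    using slotwise_additive_expand[OF assms] by simp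
  also have "\<dots> = g (?y {}) + (\<Sum>S\<in>Pow {..<?n} - {{}}. g (?y S))"
    by (rule sum.remove) auto
  also have "?y {} = xs"
    by (rule nth_equalityI) auto
  also have "Pow {..<?n} - {{}} = {S. S \<subseteq> {..<?n} \<and> S \<noteq> {}}"
    by auto
  finally show ?thesis
    unfolding T_op_def by (simp add: algebra_simps)
qed

lemma dCE_add:
  fixes r :: "'g \<Rightarrow> 'v::ab_group_add \<Rightarrow> 'v"
  assumes "\<And>x. additive (r x)"
  shows "dCE r br (\<lambda>ys. g ys + h ys) xs = dCE r br g xs + dCE r br h xs"
proof -
  have "(if c then u + v else 0) = (if c then u else 0) + (if c then v else 0)" for c and u v :: 'v
    by simp
  then show ?thesis
    unfolding dCE_eq_box_sums
    by (simp add: additive.add[OF assms] sgnv_add sum.distrib add_ac cong: if_cong)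
qed

lemma dCE_comp_intertwining:
  assumes "additive \<Phi>" and "\<And>x u. \<Phi> (r0 x u) = r x (\<Phi> u)"
  shows "dCE r br (\<lambda>ys. \<Phi> (g ys)) xs = \<Phi> (dCE r0 br g xs)"
  unfolding dCE_eq_box_sums
  by (simp add: assms(2) additive.add[OF assms(1)] additive.sum[OF assms(1)] if_distrib[of \<Phi>]
      additive.zero[OF assms(1)] additive.minus[OF assms(1)] sgnv_def cong: if_cong)

lemma dCE_diff:
  assumes "\<And>x. additive (r x)"
  shows "dCE r br (\<lambda>ys. g ys - h ys) xs = dCE r br g xs - dCE r br h xs"
proof -
  have "dCE r br (\<lambda>ys. - h ys) xs = - dCE r br h xs"
    by (rule dCE_comp_intertwining) (simp_all add: additive_def additive.minus[OF assms])
  then show ?thesis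
    using dCE_add[OF assms, where g = g and h = "\<lambda>ys. - h ys"] by simp
qed

lemma dCE_sgnv:
  assumes "\<And>x. additive (r x)"
  shows "dCE r br (\<lambda>ys. sgnv k (g ys)) xs = sgnv k (dCE r br g xs)"
  by (rule dCE_comp_intertwining[OF additive_sgnv]) (simp add: sgnv_def additive.minus[OF assms])

lemma dCE_map:
  assumes "\<And>x y. \<phi> (br x y) = br (\<phi> x) (\<phi> y)"
  shows "dCE (\<lambda>x. r (\<phi> x)) br (\<lambda>ys. g (map \<phi> ys)) xs = dCE r br g (map \<phi> xs)"
proof -
  have "map \<phi> (del i ys) = del i (map \<phi> ys)" for i ys
    by (simp add: del_def take_map drop_map)
  then show ?thesis
    unfolding dCE_eq_box_sums by (simp add: assms cong: if_cong)
qed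

lemma dCE_cong:
  assumes "\<And>ys. length ys + 1 = length xs \<Longrightarrow> g ys = h ys"
  shows "dCE r br g xs = dCE r br h xs"
  unfolding dCE_eq_box_sums using assms
  by (intro arg_cong2[where f = "(+)"] sum.cong refl) (auto simp: length_del)

section \<open>Difference Lie algebras and their representations\<close>

lemma lie_algebra_bracket_additive:
  assumes "lie_algebra sg br"
  shows "additive (br z)" and "additive (\<lambda>x. br x z)"
  using assms unfolding lie_algebra_def by (auto intro: linear_imp_additive)

lemma lie_algebra_antisym:
  assumes "lie_algebra sg br"
  shows "br x y = - br y x"
proof -
  note add = additive.add[OF lie_algebra_bracket_additive(1)[OF assms]]
    additive.add[OF lie_algebra_bracket_additive(2)[OF assms]]
  have alt: "br z z = 0" for z
    using assms unfolding lie_algebra_def by blast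
  have "0 = br (x + y) (x + y)" by (simp add: alt)
  also have "\<dots> = br x y + br y x" by (simp only: add) (simp add: alt)
  finally have "br x y + br y x = 0" by simp
  then show ?thesis by (simp add: eq_neg_iff_add_eq_0)
qed

lemma lie_algebra_jacobi_left_nested:
  assumes "lie_algebra sg br"
  shows "br (br p q) t - br (br p t) q + br (br q t) p = 0"
proof -
  note antisym = lie_algebra_antisym[OF assms]
  have "br (br p t) q = br q (br t p)"
    using antisym additive.minus[OF lie_algebra_bracket_additive(1)[OF assms]] by metis
  then have "br (br p q) t - br (br p t) q + br (br q t) p
      = - (br t (br p q) + br p (br q t) + br q (br t p))"
    using antisym[of "br p q"] antisym[of "br q t"] by (simp add: algebra_simps)
  also have "br t (br p q) + br p (br q t) + br q (br t p) = 0"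
    using assms unfolding lie_algebra_def by blast
  finally show ?thesis by simp
qed

lemma dCE_dCE_alt_multilinear_eq_0:
  assumes "lie_algebra sg br"
    and "\<And>x. additive (r x)"
    and "\<And>x y u. r (br x y) u = r x (r y u) - r y (r x u)"
    and "alt_multilinear sg sv n f"
    and "length xs = n + 2"
  shows "dCE r br (dCE r br f) xs = 0"
  by (rule dCE_dCE_eq_0[OF assms(2,3) lie_algebra_jacobi_left_nested[OF assms(1)]
        slotwise_additive_Cons[OF alt_multilinear_slotwise_additive[OF assms(4)]]
        alt_multilinear_swap[OF assms(4)] assms(5)])

lemma difference_lie_algebra_lie_algebra:
  "difference_lie_algebra sg br D \<Longrightarrow> lie_algebra sg br"
  unfolding difference_lie_algebra_def by blast

lemma difference_lie_algebra_bracket_hom: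
  assumes "difference_lie_algebra sg br D"
  shows "br x y + D (br x y) = br (x + D x) (y + D y)"
proof -
  have lie: "lie_algebra sg br"
    using assms by (rule difference_lie_algebra_lie_algebra)
  have D_bracket: "D (br x y) = br x (D y) - br y (D x) + br (D x) (D y)"
    using assms unfolding difference_lie_algebra_def by blast
  note add = additive.add[OF lie_algebra_bracket_additive(1)[OF lie]]
    additive.add[OF lie_algebra_bracket_additive(2)[OF lie]]
  show ?thesis
    unfolding D_bracket add lie_algebra_antisym[OF lie, of y "D x"] by (simp add: algebra_simps)
qed

lemma diff_representation_additive:
  assumes "diff_representation sg br D sv rho K"
  shows "additive (rho x)" and "additive (\<lambda>x. rho x u)" and "additive K"
  using assms unfolding diff_representation_def by (auto intro: linear_imp_additive)

lemma diff_representation_bracket: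
  "diff_representation sg br D sv rho K \<Longrightarrow> rho (br x y) u = rho x (rho y u) - rho y (rho x u)"
  unfolding diff_representation_def by blast

lemma diff_representation_twisted_additive:
  "diff_representation sg br D sv rho K \<Longrightarrow> additive (\<lambda>u. rho x u + rho (D x) u)"
  by (intro additive_add diff_representation_additive(1))

lemma diff_representation_twisted_bracket:
  assumes "difference_lie_algebra sg br D" and "diff_representation sg br D sv rho K"
  shows "rho (br x y) u + rho (D (br x y)) u
    = rho x (rho y u + rho (D y) u) + rho (D x) (rho y u + rho (D y) u)
      - (rho y (rho x u + rho (D x) u) + rho (D y) (rho x u + rho (D x) u))"
proof -
  note add_left = additive.add[OF diff_representation_additive(2)[OF assms(2)]]
  have "rho (br x y) u + rho (D (br x y)) u = rho (br (x + D x) (y + D y)) u"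
    by (simp add: difference_lie_algebra_bracket_hom[OF assms(1), symmetric] add_left)
  then show ?thesis
    by (simp add: diff_representation_bracket[OF assms(2)] add_left)
qed

lemma diff_representation_intertwining:
  assumes "diff_representation sg br D sv rho K"
  shows "rho x u + K (rho x u) = rho x (u + K u) + rho (D x) (u + K u)"
proof -
  have "K (rho x u) = rho (D x) u + rho x (K u) + rho (D x) (K u)"
    using assms unfolding diff_representation_def by blast
  then show ?thesis
    by (simp add: additive.add[OF diff_representation_additive(1)[OF assms]] algebra_simps)
qed

lemma diff_representation_dCE_dCE_eq_0:
  assumes "difference_lie_algebra sg br D" and "diff_representation sg br D sv rho K"
    and "alt_multilinear sg sv n f" and "length xs = n + 2"
  shows "dCE rho br (dCE rho br f) xs = 0"
  by (rule dCE_dCE_alt_multilinear_eq_0[OF difference_lie_algebra_lie_algebra[OF assms(1)]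
        diff_representation_additive(1)[OF assms(2)] diff_representation_bracket[OF assms(2)] assms(3,4)])

lemma partial_op_partial_op_eq_0:
  assumes "difference_lie_algebra sg br D" and "diff_representation sg br D sv rho K"
    and "alt_multilinear sg sv m \<theta>" and "length xs = m + 2"
  shows "partial_op rho br D (partial_op rho br D \<theta>) xs = 0"
  unfolding partial_op_def
  by (rule dCE_dCE_alt_multilinear_eq_0[OF difference_lie_algebra_lie_algebra[OF assms(1)]
        diff_representation_twisted_additive[OF assms(2)]
        diff_representation_twisted_bracket[OF assms(1,2)] assms(3,4)])

lemma partial_op_add:
  assumes "diff_representation sg br D sv rho K"
  shows "partial_op rho br D (\<lambda>ys. g ys + h ys) xs = partial_op rho br D g xs + partial_op rho br D h xs"
  unfolding partial_op_def using diff_representation_twisted_additive[OF assms] by (rule dCE_add)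

lemma partial_op_T_op_add_T_op_dCE_eq_0:
  assumes dla: "difference_lie_algebra sg br D" and rep: "diff_representation sg br D sv rho K"
    and f: "alt_multilinear sg sv n f" and len: "length xs = n + 1"
  shows "partial_op rho br D (T_op D K f) xs + T_op D K (dCE rho br f) xs = 0"
proof -
  define \<phi> where "\<phi> = (\<lambda>x. x + D x)"
  define \<Phi> where "\<Phi> = (\<lambda>u. u + K u)"
  let ?rho' = "\<lambda>x u. rho x u + rho (D x) u"
  note rho_additive = diff_representation_additive[OF rep]
  have rho'_eq: "?rho' x u = rho (\<phi> x) u" for x u
    unfolding \<phi>_def by (simp add: additive.add[OF rho_additive(2)])
  have \<Phi>_additive: "additive \<Phi>"
    unfolding \<Phi>_def by unfold_locales (simp add: additive.add[OF rho_additive(3)] algebra_simps)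
  have f_slotwise: "slotwise_additive n f"
    by (rule alt_multilinear_slotwise_additive[OF f])
  have "partial_op rho br D (T_op D K f) xs = dCE ?rho' br (\<lambda>ys. sgnv n (f (map \<phi> ys) - \<Phi> (f ys))) xs"
    unfolding partial_op_def using len f_slotwise
    by (intro dCE_cong) (simp add: T_op_eq \<phi>_def \<Phi>_def)
  also have "\<dots> = sgnv n (dCE ?rho' br (\<lambda>ys. f (map \<phi> ys)) xs - dCE ?rho' br (\<lambda>ys. \<Phi> (f ys)) xs)"
    by (simp add: dCE_sgnv dCE_diff diff_representation_twisted_additive[OF rep])
  also have "dCE ?rho' br (\<lambda>ys. f (map \<phi> ys)) xs = dCE rho br f (map \<phi> xs)"
    unfolding rho'_eq by (rule dCE_map) (simp add: \<phi>_def difference_lie_algebra_bracket_hom[OF dla])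
  also have "dCE ?rho' br (\<lambda>ys. \<Phi> (f ys)) xs = \<Phi> (dCE rho br f xs)"
    by (rule dCE_comp_intertwining[OF \<Phi>_additive])
      (simp add: \<Phi>_def diff_representation_intertwining[OF rep])
  also have "sgnv n (dCE rho br f (map \<phi> xs) - \<Phi> (dCE rho br f xs)) = - T_op D K (dCE rho br f) xs"
  proof -
    have "slotwise_additive (length xs) (dCE rho br f)"
      unfolding len Suc_eq_plus1[symmetric]
      by (intro slotwise_additive_dCE rho_additive f_slotwise
          lie_algebra_bracket_additive[OF difference_lie_algebra_lie_algebra[OF dla]])
    then show ?thesis
      by (simp add: T_op_eq len sgnv_Suc \<phi>_def \<Phi>_def)
  qed
  finally show ?thesis by simp
qed

theorem theorem4p10:
  fixes sg :: "'k::field \<Rightarrow> 'g::ab_group_add \<Rightarrow> 'g"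
    and sv :: "'k \<Rightarrow> 'v::ab_group_add \<Rightarrow> 'v"
    and br :: "'g \<Rightarrow> 'g \<Rightarrow> 'g" and D :: "'g \<Rightarrow> 'g"
    and rho :: "'g \<Rightarrow> 'v \<Rightarrow> 'v" and K :: "'v \<Rightarrow> 'v"
  assumes "difference_lie_algebra sg br D"
    and "diff_representation sg br D sv rho K"
    and "cochain sg sv n c"
  shows "(\<forall>xs. length xs = n + 2 \<longrightarrow> fst (delta rho br D K (delta rho br D K c)) xs = 0)
       \<and> (\<forall>xs. length xs = n + 1 \<longrightarrow> snd (delta rho br D K (delta rho br D K c)) xs = 0)"
proof -
  obtain f \<theta> where c: "c = (f, \<theta>)" by (cases c)
  \<comment> \<open>for n = 1 the component \<theta> = 0 is an alternating map of arity 0\<close>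
  have "alt_multilinear sg sv 0 (\<lambda>_. 0 :: 'v)"
    by (simp add: alt_multilinear_def)
  then have n: "n \<ge> 1" and f: "alt_multilinear sg sv n f" and \<theta>: "alt_multilinear sg sv (n - 1) \<theta>"
    using assms(3) unfolding cochain_def c by (auto split: if_splits)
  have "dCE rho br (dCE rho br f) xs = 0" if "length xs = n + 2" for xs
    using assms(1,2) f that by (rule diff_representation_dCE_dCE_eq_0)
  moreover have "partial_op rho br D (\<lambda>ys. partial_op rho br D \<theta> ys + T_op D K f ys) xs
      + T_op D K (dCE rho br f) xs = 0" if "length xs = n + 1" for xs
    using partial_op_partial_op_eq_0[OF assms(1,2) \<theta>, of xs] n that
      partial_op_T_op_add_T_op_dCE_eq_0[OF assms(1,2) f that]
    by (simp add: partial_op_add[OF assms(2)] add.assoc)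
  ultimately show ?thesis
    unfolding c delta_def by simp
qed

end
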